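(* Let $G=(V,E)$ be a graph and $v\in V$. Then $v\in\mathrm{core}(G)$ if and only if one of the following holds: (1) $v$ is isolated; (2) $\gamma(G-v)>\gamma(G)$; (3) $\gamma(G-v)=\gamma(G)$ and every neighbor $w\in N(v)$ satisfies $w\in\mathrm{anticore}(G-v)$.
   Context: All graphs are finite, simple and undirected. $N(v)$ is the set of neighbors of $v$. $\gamma(G)$ is the domination number (minimum size of a dominating set); a minimum dominating set (mds) is a dominating set of size $\gamma(G)$. For a graph $H$, $\mathrm{core}(H)$ is the set of vertices belonging to every mds of $H$, $\mathrm{corona}(H)$ the set of vertices belonging to at least one mds of $H$, and $\mathrm{anticore}(H)=V(H)\setminus\mathrm{corona}(H)$. $G-v$ is the graph obtained by deleting $v$. A vertex is isolated if it has no neighbors. *)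

theory Defs
  imports Main
begin

definition simple_graph :: "'a set \<Rightarrow> ('a \<Rightarrow> 'a \<Rightarrow> bool) \<Rightarrow> bool" where
  "simple_graph V E \<longleftrightarrow> finite V \<and> (\<forall>x y. E x y \<longrightarrow> E y x) \<and> (\<forall>x. \<not> E x x)
     \<and> (\<forall>x y. E x y \<longrightarrow> x \<in> V \<and> y \<in> V)"

definition nbrs :: "'a set \<Rightarrow> ('a \<Rightarrow> 'a \<Rightarrow> bool) \<Rightarrow> 'a \<Rightarrow> 'a set" where
  "nbrs V E v = {w \<in> V. E v w}"

definition isolated :: "'a set \<Rightarrow> ('a \<Rightarrow> 'a \<Rightarrow> bool) \<Rightarrow> 'a \<Rightarrow> bool" where
  "isolated V E v \<longleftrightarrow> nbrs V E v = {}"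

definition dominating :: "'a set \<Rightarrow> ('a \<Rightarrow> 'a \<Rightarrow> bool) \<Rightarrow> 'a set \<Rightarrow> bool" where
  "dominating V E D \<longleftrightarrow> D \<subseteq> V \<and> (\<forall>x \<in> V. x \<in> D \<or> (\<exists>d \<in> D. E x d))"

definition domination_number :: "'a set \<Rightarrow> ('a \<Rightarrow> 'a \<Rightarrow> bool) \<Rightarrow> nat" where
  "domination_number V E = Min (card ` {D. dominating V E D})"

definition mds :: "'a set \<Rightarrow> ('a \<Rightarrow> 'a \<Rightarrow> bool) \<Rightarrow> 'a set \<Rightarrow> bool" where
  "mds V E D \<longleftrightarrow> dominating V E D \<and> card D = domination_number V E"

definition core :: "'a set \<Rightarrow> ('a \<Rightarrow> 'a \<Rightarrow> bool) \<Rightarrow> 'a set" where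
  "core V E = {x \<in> V. \<forall>D. mds V E D \<longrightarrow> x \<in> D}"

definition corona :: "'a set \<Rightarrow> ('a \<Rightarrow> 'a \<Rightarrow> bool) \<Rightarrow> 'a set" where
  "corona V E = {x \<in> V. \<exists>D. mds V E D \<and> x \<in> D}"

definition anticore :: "'a set \<Rightarrow> ('a \<Rightarrow> 'a \<Rightarrow> bool) \<Rightarrow> 'a set" where
  "anticore V E = V - corona V E"

definition del_vertex_V :: "'a set \<Rightarrow> 'a \<Rightarrow> 'a set" where
  "del_vertex_V V v = V - {v}"

definition del_vertex_E :: "('a \<Rightarrow> 'a \<Rightarrow> bool) \<Rightarrow> 'a \<Rightarrow> ('a \<Rightarrow> 'a \<Rightarrow> bool)" where
  "del_vertex_E E v = (\<lambda>x y. E x y \<and> x \<noteq> v \<and> y \<noteq> v)"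

end

theory Submission
  imports Defs
begin

text \<open>An mds of G avoiding v dominates v through some neighbour d and also dominates
G - v, so \<open>\<gamma>(G - v) \<le> \<gamma>(G)\<close>, and under equality it is an mds of G - v containing d.
Conversely, an mds of G - v plus a neighbour of v dominates G, and so does the mds itself
if it already contains a neighbour of v; neither set contains v. Hence v misses some mds of
G exactly when v has a neighbour and either \<open>\<gamma>(G - v) < \<gamma>(G)\<close>, or \<open>\<gamma>(G - v) = \<gamma>(G)\<close>
and some neighbour of v lies in the corona of G - v.\<close>

lemma finite_dominating_sets: "finite V \<Longrightarrow> finite {D. dominating V E D}"
  by (rule finite_subset[of _ "Pow V"]) (auto simp: dominating_def)

lemma domination_number_le_card:
  "finite V \<Longrightarrow> dominating V E D \<Longrightarrow> domination_number V E \<le> card D"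
  unfolding domination_number_def using finite_dominating_sets[of V E] by (intro Min_le) auto

lemma mds_exists:
  assumes "finite V"
  obtains D where "mds V E D"
proof -
  have "dominating V E V" by (auto simp: dominating_def)
  hence "domination_number V E \<in> card ` {D. dominating V E D}"
    unfolding domination_number_def using finite_dominating_sets[OF assms, of E]
    by (intro Min_in) auto
  thus ?thesis using that by (auto simp: mds_def)
qed

lemma dominating_del_vertex:
  "dominating V E D \<Longrightarrow> v \<notin> D \<Longrightarrow> dominating (del_vertex_V V v) (del_vertex_E E v) D"
  by (auto simp: dominating_def del_vertex_V_def del_vertex_E_def)

lemma dominating_if_dominating_del_vertex:
  "dominating (del_vertex_V V v) (del_vertex_E E v) D \<Longrightarrow> w \<in> D \<Longrightarrow> E v w
    \<Longrightarrow> dominating V E D"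
  by (auto simp: dominating_def del_vertex_V_def del_vertex_E_def)

lemma dominating_insert_neighbour:
  "dominating (del_vertex_V V v) (del_vertex_E E v) D \<Longrightarrow> E v w \<Longrightarrow> w \<in> V
    \<Longrightarrow> dominating V E (insert w D)"
  by (auto simp: dominating_def del_vertex_V_def del_vertex_E_def)

lemma vertex_not_in_mds_del_vertex:
  "mds (del_vertex_V V v) (del_vertex_E E v) D \<Longrightarrow> v \<notin> D"
  by (auto simp: mds_def dominating_def del_vertex_V_def)

lemma domination_number_le_del_vertex_if_core:
  assumes G: "simple_graph V E" and core: "v \<in> core V E" and vw: "E v w"
  shows "domination_number V E \<le> domination_number (del_vertex_V V v) (del_vertex_E E v)"
proof (rule ccontr)
  let ?V = "del_vertex_V V v" and ?E = "del_vertex_E E v"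
  assume "\<not> ?thesis"
  hence lt: "domination_number ?V ?E < domination_number V E" by simp
  have fin: "finite V" and w: "w \<in> V" "w \<noteq> v"
    using G vw by (auto simp: simple_graph_def)
  obtain D where D: "mds ?V ?E D"
    using mds_exists[of ?V ?E] fin by (auto simp: del_vertex_V_def)
  have "finite D"
    using D fin by (auto simp: mds_def dominating_def del_vertex_V_def intro: finite_subset)
  hence "card (insert w D) \<le> domination_number ?V ?E + 1"
    using D by (simp add: mds_def card_insert_if)
  moreover have dom: "dominating V E (insert w D)"
    using dominating_insert_neighbour[of V v E D w] D vw w(1) by (simp add: mds_def)
  ultimately have "mds V E (insert w D)"
    using lt domination_number_le_card[OF fin dom] by (simp add: mds_def)
  moreover have "v \<notin> insert w D" using vertex_not_in_mds_del_vertex[OF D] w by simp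
  ultimately show False using core by (auto simp: core_def)
qed

lemma neighbour_in_anticore_del_vertex_if_core:
  assumes G: "simple_graph V E" and core: "v \<in> core V E" and vw: "E v w"
    and eq: "domination_number (del_vertex_V V v) (del_vertex_E E v) = domination_number V E"
  shows "w \<in> anticore (del_vertex_V V v) (del_vertex_E E v)"
proof (rule ccontr)
  let ?V = "del_vertex_V V v" and ?E = "del_vertex_E E v"
  assume "\<not> ?thesis"
  moreover have "w \<in> ?V" using G vw by (auto simp: simple_graph_def del_vertex_V_def)
  ultimately obtain D where D: "mds ?V ?E D" "w \<in> D"
    by (auto simp: anticore_def corona_def)
  hence "mds V E D"
    using dominating_if_dominating_del_vertex[of V v E D w] D vw eq by (simp add: mds_def)
  thus False using core vertex_not_in_mds_del_vertex[OF D(1)] by (auto simp: core_def)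
qed

lemma domination_number_del_vertex_le_if_mds_avoids:
  assumes "finite V" "mds V E D" "v \<notin> D"
  shows "domination_number (del_vertex_V V v) (del_vertex_E E v) \<le> domination_number V E"
proof -
  have "finite (del_vertex_V V v)" using assms(1) by (simp add: del_vertex_V_def)
  moreover have "dominating (del_vertex_V V v) (del_vertex_E E v) D"
    using assms(2,3) dominating_del_vertex by (auto simp: mds_def)
  ultimately show ?thesis
    using domination_number_le_card assms(2) by (metis mds_def)
qed

lemma corona_del_vertex_if_mds_avoids:
  assumes "mds V E D" "v \<notin> D" "d \<in> D" "d \<noteq> v"
    and "domination_number (del_vertex_V V v) (del_vertex_E E v) = domination_number V E"
  shows "d \<in> corona (del_vertex_V V v) (del_vertex_E E v)"
  using assms dominating_del_vertex[of V E D v]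
  by (auto simp: mds_def corona_def del_vertex_V_def dominating_def)

theorem theorem5:
  fixes V :: "'a set" and E :: "'a \<Rightarrow> 'a \<Rightarrow> bool" and v :: 'a
  assumes "simple_graph V E" and "v \<in> V"
  shows "v \<in> core V E \<longleftrightarrow>
           (isolated V E v
            \<or> domination_number (del_vertex_V V v) (del_vertex_E E v) > domination_number V E
            \<or> (domination_number (del_vertex_V V v) (del_vertex_E E v) = domination_number V E
               \<and> (\<forall>w \<in> nbrs V E v. w \<in> anticore (del_vertex_V V v) (del_vertex_E E v))))"
    (is "_ \<longleftrightarrow> ?iso \<or> ?gt \<or> ?eq \<and> ?anti")
proof
  assume core: "v \<in> core V E"
  show "?iso \<or> ?gt \<or> ?eq \<and> ?anti"
  proof (cases ?iso)
    case False
    then obtain w where "E v w" by (auto simp: isolated_def nbrs_def)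
    hence "\<not> ?gt \<Longrightarrow> ?eq"
      using domination_number_le_del_vertex_if_core[OF assms(1) core, of w] by simp
    moreover have "?eq \<Longrightarrow> ?anti"
      using neighbour_in_anticore_del_vertex_if_core[OF assms(1) core] by (simp add: nbrs_def)
    ultimately show ?thesis by blast
  qed simp
next
  assume H: "?iso \<or> ?gt \<or> ?eq \<and> ?anti"
  have fin: "finite V" and irr: "\<not> E v v" using assms(1) by (auto simp: simple_graph_def)
  show "v \<in> core V E" unfolding core_def
  proof (intro CollectI conjI allI impI assms(2))
    fix D assume D: "mds V E D"
    show "v \<in> D"
    proof (rule ccontr)
      assume vD: "v \<notin> D"
      have dom: "dominating V E D" using D by (simp add: mds_def)
      then obtain d where d: "d \<in> D" "E v d"
        using assms(2) vD unfolding dominating_def by blast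
      have "d \<noteq> v" using d(2) irr by blast
      have nbr: "d \<in> nbrs V E v" using d dom by (auto simp: nbrs_def dominating_def)
      hence "\<not> ?iso" by (auto simp: isolated_def)
      moreover have "\<not> ?gt"
        using domination_number_del_vertex_le_if_mds_avoids[OF fin D vD] by simp
      moreover have "?eq \<Longrightarrow> d \<notin> anticore (del_vertex_V V v) (del_vertex_E E v)"
        using corona_del_vertex_if_mds_avoids[OF D vD d(1) \<open>d \<noteq> v\<close>]
        by (simp add: anticore_def)
      ultimately show False using H nbr by blast
    qed
  qed
qed

end
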